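(* Let $a,a^*\in\mathbb K$ be nonzero, and let $A,A^*\in\mathcal U$ satisfy either ($A=ay^-_1$ and $A^*=a^*y^-_0$) or ($A=ay^+_0$ and $A^*=a^*y^+_1$). Let $V$ be a finite-dimensional irreducible $\mathcal U$-module of type $(1,1)$, and assume $V$ is irreducible as an $(A,A^* )$-module, i.e. there is no subspace $W$ of $V$ with $AW\subseteq W$, $A^*W\subseteq W$, $W\ne0$, $W\ne V$. Then $A,A^*$ act on $V$ as a tridiagonal pair. Denoting its diameter by $d$, the sequence $aq^{2i-d}$ ($0\le i\le d$) is a standard ordering of the eigenvalues of $A$ on $V$ and the sequence $a^*q^{d-2i}$ ($0\le i\le d$) is a standard ordering of the eigenvalues of $A^*$ on $V$.
   Context: $\mathbb K$ is an algebraically closed field, $q\in\mathbb K$ nonzero and not a root of unity, $[3]_q=\frac{q^3-q^{-3}}{q-q^{-1}}$. $\mathcal U$ (isomorphic to $U_q(\widehat{sl}_2)$) is the unital associative $\mathbb K$-algebra with generators $y^{\pm}_i,k_i^{\pm1}$ ($i\in\{0,1\}$) and relations: $k_ik_i^{-1}=k_i^{-1}k_i=1$; $k_0k_1$ central; $\frac{qy^+_ik_i-q^{-1}k_iy^+_i}{q-q^{-1}}=1$; $\frac{qk_iy^-_i-q^{-1}y^-_ik_i}{q-q^{-1}}=1$; $\frac{qy^-_iy^+_i-q^{-1}y^+_iy^-_i}{q-q^{-1}}=1$; $\frac{qy^+_iy^-_j-q^{-1}y^-_jy^+_i}{q-q^{-1}}=k_0^{-1}k_1^{-1}$ ($i\ne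 j$); $(y^{\pm}_i)^3y^{\pm}_j-[3]_q(y^{\pm}_i)^2y^{\pm}_jy^{\pm}_i+[3]_qy^{\pm}_iy^{\pm}_j(y^{\pm}_i)^2-y^{\pm}_j(y^{\pm}_i)^3=0$ ($i\ne j$). Type: for a finite-dimensional irreducible $\mathcal U$-module $V$ there are unique nonzero scalars $\varepsilon_0,\varepsilon_1$ and a unique decomposition $U_0,\dots,U_e$ of $V$ (nonzero subspaces, direct sum equal to $V$) with $(k_0-\varepsilon_0q^{2i-e}I)U_i=0$ and $(k_1-\varepsilon_1q^{e-2i}I)U_i=0$ for $0\le i\le e$; the pair $(\varepsilon_0,\varepsilon_1)$ is called the type of $V$. A tridiagonal pair on $V$ is an ordered pair $A,A^*$ of linear maps $V\to V$ such that: (i) each is diagonalizable; (ii) there is an ordering $V_0,\dots,V_d$ of the eigenspaces of $A$ with $A^*V_i\subseteq V_{i-1}+V_i+V_{i+1}$ ($V_{-1}=V_{d+1}=0$); (iii) there is an ordering $V^*_0,\dots,V^*_\delta$ of the eigenspaces of $A^*$ with $AV^*_i\subseteq V^*_{i-1}+V^*_i+V^*_{i+1}$ ($V^*_{-1}=V^*_{\delta+1}=0$); (iv) no subspace $W\ne0,V$ satisfies $AW\subseteq W$, $A^*W\subseteq W$. It is known $d=\delta$, called the diameter. Orderings of eigenspaces satisfying (ii),(iii) are standard; an ordering of eigenvalues is standard if the corresponding eigenspace ordering is. *)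

theory Defs
  imports "HOL-Analysis.Analysis" "HOL-Computational_Algebra.Polynomial"
begin

text \<open>Finite-dimensional modules are modelled on \<open>V = 'k^'n\<close> (\<open>'n\<close> a finite type,
  so \<open>V \<noteq> 0\<close>), each generator acting by an \<open>'n \<times> 'n\<close> matrix.\<close>

definition not_root_of_unity :: "'k::field \<Rightarrow> bool" where
  "not_root_of_unity q \<longleftrightarrow> (\<forall>m::nat. m > 0 \<longrightarrow> q ^ m \<noteq> 1)"

definition qint3 :: "'k::field \<Rightarrow> 'k" where
  "qint3 q = (q ^ 3 - inverse q ^ 3) / (q - inverse q)"

definition qcomm :: "'k::field \<Rightarrow> 'k^'n^'n \<Rightarrow> 'k^'n^'n \<Rightarrow> 'k^'n^'n" where
  "qcomm q X Y = mat (inverse (q - inverse q)) ** (mat q ** (X ** Y) - mat (inverse q) ** (Y ** X))"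

definition serre :: "'k::field \<Rightarrow> 'k^'n^'n \<Rightarrow> 'k^'n^'n \<Rightarrow> 'k^'n^'n" where
  "serre q X Y = X ** X ** X ** Y - mat (qint3 q) ** (X ** X ** Y ** X)
     + mat (qint3 q) ** (X ** Y ** X ** X) - Y ** X ** X ** X"

text \<open>A \<open>\<U>\<close>-module structure on \<open>'k^'n\<close>: \<open>Yp i, Ym i, K i, Ki i\<close> are the actions of
  \<open>y\<^sup>+\<^sub>i, y\<^sup>-\<^sub>i, k\<^sub>i, k\<^sub>i\<^sup>-\<^sup>1\<close> for \<open>i \<in> {0,1}\<close>.\<close>
definition U_module ::
  "'k::field \<Rightarrow> (nat \<Rightarrow> 'k^'n^'n) \<Rightarrow> (nat \<Rightarrow> 'k^'n^'n) \<Rightarrow> (nat \<Rightarrow> 'k^'n^'n) \<Rightarrow> (nat \<Rightarrow> 'k^'n^'n) \<Rightarrow> bool" where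
  "U_module q Yp Ym K Ki \<longleftrightarrow>
     (\<forall>i\<in>{0,1}. K i ** Ki i = mat 1 \<and> Ki i ** K i = mat 1) \<and>
     (\<forall>i\<in>{0,1}. \<forall>X\<in>{Yp i, Ym i, K i, Ki i}. (K 0 ** K 1) ** X = X ** (K 0 ** K 1)) \<and>
     (\<forall>i\<in>{0,1}. qcomm q (Yp i) (K i) = mat 1) \<and>
     (\<forall>i\<in>{0,1}. qcomm q (K i) (Ym i) = mat 1) \<and>
     (\<forall>i\<in>{0,1}. qcomm q (Ym i) (Yp i) = mat 1) \<and>
     (\<forall>i\<in>{0,1}. \<forall>j\<in>{0,1}. i \<noteq> j \<longrightarrow> qcomm q (Yp i) (Ym j) = Ki 0 ** Ki 1) \<and>
     (\<forall>i\<in>{0,1}. \<forall>j\<in>{0,1}. i \<noteq> j \<longrightarrow> serre q (Yp i) (Yp j) = 0 \<and> serre q (Ym i) (Ym j) = 0)"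

definition invariant :: "'k::field^'n^'n \<Rightarrow> ('k^'n) set \<Rightarrow> bool" where
  "invariant M W \<longleftrightarrow> (\<lambda>v. M *v v) ` W \<subseteq> W"

definition U_irreducible ::
  "(nat \<Rightarrow> 'k::field^'n^'n) \<Rightarrow> (nat \<Rightarrow> 'k^'n^'n) \<Rightarrow> (nat \<Rightarrow> 'k^'n^'n) \<Rightarrow> (nat \<Rightarrow> 'k^'n^'n) \<Rightarrow> bool" where
  "U_irreducible Yp Ym K Ki \<longleftrightarrow>
     (\<forall>W. vec.subspace W \<and>
        (\<forall>i\<in>{0,1}. invariant (Yp i) W \<and> invariant (Ym i) W \<and> invariant (K i) W \<and> invariant (Ki i) W)
        \<longrightarrow> W = {0} \<or> W = UNIV)"

definition has_type ::
  "'k::field \<Rightarrow> (nat \<Rightarrow> 'k^'n^'n) \<Rightarrow> 'k \<Rightarrow> 'k \<Rightarrow> bool" where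
  "has_type q K \<epsilon>0 \<epsilon>1 \<longleftrightarrow> \<epsilon>0 \<noteq> 0 \<and> \<epsilon>1 \<noteq> 0 \<and>
     (\<exists>(e::nat) (U :: nat \<Rightarrow> ('k^'n) set).
        (\<forall>i\<le>e. vec.subspace (U i) \<and> U i \<noteq> {0}) \<and>
        (\<forall>v. \<exists>u. (\<forall>i\<le>e. u i \<in> U i) \<and> v = (\<Sum>i\<le>e. u i)) \<and>
        (\<forall>u. (\<forall>i\<le>e. u i \<in> U i) \<and> (\<Sum>i\<le>e. u i) = 0 \<longrightarrow> (\<forall>i\<le>e. u i = 0)) \<and>
        (\<forall>i\<le>e. \<forall>v\<in>U i. K 0 *v v = (\<epsilon>0 * q powi (2 * int i - int e)) *s v \<and>
                         K 1 *v v = (\<epsilon>1 * q powi (int e - 2 * int i)) *s v))"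

definition eigenspace :: "'k::field^'n^'n \<Rightarrow> 'k \<Rightarrow> ('k^'n) set" where
  "eigenspace A \<theta> = {v. A *v v = \<theta> *s v}"

definition is_eigenvalue :: "'k::field^'n^'n \<Rightarrow> 'k \<Rightarrow> bool" where
  "is_eigenvalue A \<theta> \<longleftrightarrow> eigenspace A \<theta> \<noteq> {0}"

definition diagonalizable :: "'k::field^'n^'n \<Rightarrow> bool" where
  "diagonalizable A \<longleftrightarrow> vec.span (\<Union>\<theta>\<in>{\<theta>. is_eigenvalue A \<theta>}. eigenspace A \<theta>) = UNIV"

definition Esp :: "'k::field^'n^'n \<Rightarrow> nat \<Rightarrow> (nat \<Rightarrow> 'k) \<Rightarrow> int \<Rightarrow> ('k^'n) set" where
  "Esp A d \<theta> j = (if 0 \<le> j \<and> j \<le> int d then eigenspace A (\<theta> (nat j)) else {0})"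

definition standard_ordering ::
  "'k::field^'n^'n \<Rightarrow> 'k^'n^'n \<Rightarrow> nat \<Rightarrow> (nat \<Rightarrow> 'k) \<Rightarrow> bool" where
  "standard_ordering A B d \<theta> \<longleftrightarrow>
     inj_on \<theta> {0..d} \<and> \<theta> ` {0..d} = {\<mu>. is_eigenvalue A \<mu>} \<and>
     (\<forall>i\<le>d. \<forall>v\<in>eigenspace A (\<theta> i).
        B *v v \<in> {x + y + z | x y z. x \<in> Esp A d \<theta> (int i - 1) \<and> y \<in> Esp A d \<theta> (int i)
                                 \<and> z \<in> Esp A d \<theta> (int i + 1)})"

definition tridiagonal_pair :: "'k::field^'n^'n \<Rightarrow> 'k^'n^'n \<Rightarrow> bool" where
  "tridiagonal_pair A As \<longleftrightarrow>
     diagonalizable A \<and> diagonalizable As \<and>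
     (\<exists>d \<theta>. standard_ordering A As d \<theta>) \<and>
     (\<exists>\<delta> \<theta>s. standard_ordering As A \<delta> \<theta>s) \<and>
     (\<forall>W. vec.subspace W \<and> invariant A W \<and> invariant As W \<longrightarrow> W = {0} \<or> W = UNIV)"

definition diameter :: "'k::field^'n^'n \<Rightarrow> nat" where
  "diameter A = card {\<theta>. is_eigenvalue A \<theta>} - 1"

end

theory Submission
  imports Defs
begin

text \<open>On a module of type (1,1) the elements \<open>k\<^sub>0, k\<^sub>1\<close> are diagonalizable with eigenvalues
  \<open>q^(2i-e)\<close> and \<open>q^(e-2i)\<close>. The q-commutation relation of \<open>y\<^sup>-\<^sub>1\<close> with \<open>k\<^sub>1\<close> says that
  \<open>y\<^sup>-\<^sub>1\<close> maps the \<open>k\<^sub>1\<close>-eigenspace of weight \<open>\<omega>\<close> into itself plus the eigenspace of weight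
  \<open>\<omega>/q\<^sup>2\<close>, acting by \<open>\<omega>\<^sup>-\<^sup>1\<close> modulo the latter; the other three generators behave likewise.
  So \<open>A\<close> and \<open>A\<^sup>*\<close> are upper triangular with respect to the weight decomposition, with
  pairwise distinct diagonal entries \<open>a q^(2i-e)\<close> resp. \<open>a\<^sup>* q^(e-2i)\<close>, hence diagonalizable
  with exactly these eigenvalues. The q-Serre relation, applied to an eigenvector of \<open>A\<close> for
  \<open>\<theta>\<close>, says that \<open>p(A)\<close> kills its image under \<open>A\<^sup>*\<close>, where
  \<open>p(x) = x\<^sup>3 - [3]\<^sub>q x\<^sup>2\<theta> + [3]\<^sub>q x\<theta>\<^sup>2 - \<theta>\<^sup>3 = (x - \<theta>)(x - q\<^sup>2\<theta>)(x - q\<^sup>-\<^sup>2\<theta>)\<close>;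
  the roots of \<open>p\<close> are exactly \<open>\<theta>\<close> and its neighbours in the sequence of eigenvalues. This
  is tridiagonality, and irreducibility is assumed.\<close>

section \<open>Eigenspaces\<close>

lemma mat_mult_vec: "mat c *v x = c *s (x::'k::field^'n)"
  by (vector matrix_vector_mult_def mat_def) (simp add: if_distrib if_distribR cong del: if_weak_cong)

lemma mat_scaled_mult_vec: "(mat c ** M) *v x = c *s (M *v (x::'k::field^'n))"
  by (simp add: matrix_vector_mul_assoc[symmetric] mat_mult_vec)

lemma mem_eigenspace [simp]: "v \<in> eigenspace A \<mu> \<longleftrightarrow> A *v v = \<mu> *s v"
  by (simp add: eigenspace_def)

lemma subspace_eigenspace: "vec.subspace (eigenspace (A::'k::field^'n^'n) \<mu>)"
  by (rule vec.subspaceI) (auto simp: vec.add vec.scale algebra_simps vector_smult_assoc mult.commute)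

lemma eigenspace_eq_kernel: "eigenspace A \<mu> = {v. (A - mat \<mu>) *v v = 0}"
  by (auto simp: eigenspace_def matrix_vector_mult_diff_rdistrib mat_mult_vec)

lemma eigenvectors_sum_eq_0:
  fixes A :: "'k::field^'n^'n"
  assumes "finite \<Lambda>" and "\<And>\<mu>. \<mu> \<in> \<Lambda> \<Longrightarrow> w \<mu> \<in> eigenspace A \<mu>" and "(\<Sum>\<mu>\<in>\<Lambda>. w \<mu>) = 0"
  shows "\<forall>\<mu>\<in>\<Lambda>. w \<mu> = 0"
  using assms
proof (induction \<Lambda> arbitrary: w rule: finite_induct)
  case empty
  then show ?case by simp
next
  case (insert \<nu> \<Lambda>)
  let ?w' = "\<lambda>\<mu>. (\<mu> - \<nu>) *s w \<mu>"
  have "?w' \<mu> \<in> eigenspace A \<mu>" if "\<mu> \<in> \<Lambda>" for \<mu>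
    using insert.prems(1) that by (intro vec.subspace_scale[OF subspace_eigenspace]) auto
  moreover have "(\<Sum>\<mu>\<in>insert \<nu> \<Lambda>. ?w' \<mu>) = A *v (\<Sum>\<mu>\<in>insert \<nu> \<Lambda>. w \<mu>) - \<nu> *s (\<Sum>\<mu>\<in>insert \<nu> \<Lambda>. w \<mu>)"
    using insert.prems(1)
    by (simp add: vec.sum vec.scale_sum_right sum_subtractf[symmetric] vector_sub_rdistrib)
  with insert.prems(2) insert.hyps have "(\<Sum>\<mu>\<in>\<Lambda>. ?w' \<mu>) = 0"
    by simp
  ultimately have "\<forall>\<mu>\<in>\<Lambda>. ?w' \<mu> = 0"
    by (rule insert.IH)
  with insert.hyps(2) have rest: "\<forall>\<mu>\<in>\<Lambda>. w \<mu> = 0"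
    by (auto simp: vec.scale_eq_0_iff)
  with insert.prems(2) insert.hyps have "w \<nu> = 0"
    by simp
  with rest show ?case
    by simp
qed

lemma span_UN_subspaces_sum:
  fixes E :: "'i \<Rightarrow> ('k::field^'n) set"
  assumes "finite I" and "\<And>i. i \<in> I \<Longrightarrow> vec.subspace (E i)"
    and "x \<in> vec.span (\<Union>i\<in>I. E i)"
  obtains w where "\<And>i. i \<in> I \<Longrightarrow> w i \<in> E i" and "x = (\<Sum>i\<in>I. w i)"
proof -
  have "\<exists>w. (\<forall>i\<in>I. w i \<in> E i) \<and> x = (\<Sum>i\<in>I. w i)"
    using assms
  proof (induction I arbitrary: x rule: finite_induct)
    case empty
    then show ?case by simp
  next
    case (insert j I)
    have "x \<in> vec.span (E j \<union> (\<Union>i\<in>I. E i))"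
      using insert.prems(2) by simp
    moreover have "vec.span (E j) = E j"
      using insert.prems(1) by (simp add: vec.span_eq_iff)
    ultimately obtain u y where u: "u \<in> E j" and y: "y \<in> vec.span (\<Union>i\<in>I. E i)" and x: "x = u + y"
      unfolding vec.span_Un by blast
    obtain w where w: "\<forall>i\<in>I. w i \<in> E i" "y = (\<Sum>i\<in>I. w i)"
      using insert.IH[OF _ y] insert.prems(1) by blast
    have "(\<Sum>i\<in>I. (w(j := u)) i) = (\<Sum>i\<in>I. w i)"
      using insert.hyps(2) by (intro sum.cong) auto
    with insert.hyps x u w show ?case
      by (intro exI[of _ "w(j := u)"]) auto
  qed
  with that show ?thesis
    by blast
qed

lemma eigenspace_inter_span_eigenspaces:
  fixes A :: "'k::field^'n^'n"
  assumes "finite \<Lambda>" and "\<nu> \<notin> \<Lambda>"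
  shows "eigenspace A \<nu> \<inter> vec.span (\<Union>\<mu>\<in>\<Lambda>. eigenspace A \<mu>) = {0}"
proof (intro equalityI subsetI)
  fix v assume "v \<in> eigenspace A \<nu> \<inter> vec.span (\<Union>\<mu>\<in>\<Lambda>. eigenspace A \<mu>)"
  then obtain w where v: "v \<in> eigenspace A \<nu>" and w: "\<And>\<mu>. \<mu> \<in> \<Lambda> \<Longrightarrow> w \<mu> \<in> eigenspace A \<mu>"
    and sum: "v = (\<Sum>\<mu>\<in>\<Lambda>. w \<mu>)"
    using span_UN_subspaces_sum[where E="eigenspace A", OF assms(1) subspace_eigenspace] by blast
  let ?w = "w(\<nu> := - v)"
  have "\<forall>\<mu>\<in>insert \<nu> \<Lambda>. ?w \<mu> = 0"
  proof (rule eigenvectors_sum_eq_0)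
    show "\<And>\<mu>. \<mu> \<in> insert \<nu> \<Lambda> \<Longrightarrow> ?w \<mu> \<in> eigenspace A \<mu>"
      using v w assms(2) by (auto simp: vec.neg)
    have "(\<Sum>\<mu>\<in>\<Lambda>. ?w \<mu>) = v"
      using sum assms(2) by (auto intro: sum.cong)
    then show "(\<Sum>\<mu>\<in>insert \<nu> \<Lambda>. ?w \<mu>) = 0"
      using assms by simp
  qed (use assms in simp)
  then show "v \<in> {0}"
    by simp
qed (simp add: vec.span_zero)

lemma eigenvalue_mem_if_span_eigenspaces:
  fixes A :: "'k::field^'n^'n"
  assumes "finite \<Lambda>" and "vec.span (\<Union>\<mu>\<in>\<Lambda>. eigenspace A \<mu>) = UNIV" and "is_eigenvalue A \<nu>"
  shows "\<nu> \<in> \<Lambda>"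
  using eigenspace_inter_span_eigenspaces[OF assms(1), of \<nu> A] assms(2,3)
  by (auto simp: is_eigenvalue_def)

lemma span_eigenspaces_shift_onto:
  fixes A :: "'k::field^'n^'n"
  assumes "finite \<Lambda>" and "\<nu> \<notin> \<Lambda>" and "x \<in> vec.span (\<Union>\<mu>\<in>\<Lambda>. eigenspace A \<mu>)"
  obtains y where "y \<in> vec.span (\<Union>\<mu>\<in>\<Lambda>. eigenspace A \<mu>)" and "(A - mat \<nu>) *v y = x"
proof -
  obtain w where w: "\<And>\<mu>. \<mu> \<in> \<Lambda> \<Longrightarrow> w \<mu> \<in> eigenspace A \<mu>" and x: "x = (\<Sum>\<mu>\<in>\<Lambda>. w \<mu>)"
    using span_UN_subspaces_sum[where E="eigenspace A", OF assms(1) subspace_eigenspace assms(3)] by blast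
  let ?y = "\<Sum>\<mu>\<in>\<Lambda>. inverse (\<mu> - \<nu>) *s w \<mu>"
  have "?y \<in> vec.span (\<Union>\<mu>\<in>\<Lambda>. eigenspace A \<mu>)"
    using w by (intro vec.span_sum vec.span_scale vec.span_base) blast
  moreover have "(A - mat \<nu>) *v ?y = x"
  proof -
    have "(A - mat \<nu>) *v (inverse (\<mu> - \<nu>) *s w \<mu>) = w \<mu>" if "\<mu> \<in> \<Lambda>" for \<mu>
    proof -
      have "\<mu> \<noteq> \<nu>"
        using assms(2) that by blast
      have "(A - mat \<nu>) *v (inverse (\<mu> - \<nu>) *s w \<mu>) = inverse (\<mu> - \<nu>) *s ((\<mu> - \<nu>) *s w \<mu>)"
        using w[OF that] by (simp add: vec.scale matrix_vector_mult_diff_rdistrib mat_mult_vec vector_sub_rdistrib)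
      also have "\<dots> = (inverse (\<mu> - \<nu>) * (\<mu> - \<nu>)) *s w \<mu>"
        by (rule vector_smult_assoc)
      also have "\<dots> = w \<mu>"
        using \<open>\<mu> \<noteq> \<nu>\<close> by simp
      finally show ?thesis .
    qed
    then show ?thesis
      unfolding x by (simp add: vec.sum)
  qed
  ultimately show ?thesis
    using that by blast
qed

definition diagonalizable_spectrum :: "'k::field^'n^'n \<Rightarrow> 'k set \<Rightarrow> bool" where
  "diagonalizable_spectrum A \<Lambda> \<longleftrightarrow> diagonalizable A \<and> {\<mu>. is_eigenvalue A \<mu>} = \<Lambda>"

lemma diagonalizable_spectrum_span:
  "diagonalizable_spectrum A \<Lambda> \<Longrightarrow> vec.span (\<Union>\<mu>\<in>\<Lambda>. eigenspace A \<mu>) = UNIV"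
  by (auto simp: diagonalizable_spectrum_def diagonalizable_def)

lemma diagonalizable_spectrumI:
  fixes A :: "'k::field^'n^'n"
  assumes "finite \<Lambda>" and "vec.span (\<Union>\<mu>\<in>\<Lambda>. eigenspace A \<mu>) = UNIV"
    and "\<And>\<mu>. \<mu> \<in> \<Lambda> \<Longrightarrow> is_eigenvalue A \<mu>"
  shows "diagonalizable_spectrum A \<Lambda>"
proof -
  have "{\<mu>. is_eigenvalue A \<mu>} = \<Lambda>"
    using eigenvalue_mem_if_span_eigenspaces[OF assms(1,2)] assms(3) by blast
  with assms(2) show ?thesis
    by (simp add: diagonalizable_spectrum_def diagonalizable_def)
qed

section \<open>Operators that are upper triangular with distinct diagonal scalars\<close>

locale upper_triangular =
  fixes A :: "'k::field^'n^'n" and E :: "nat \<Rightarrow> ('k^'n) set" and \<theta> :: "nat \<Rightarrow> 'k" and e :: nat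
  assumes subspace_E: "\<And>j. j \<le> e \<Longrightarrow> vec.subspace (E j)"
    and span_E: "vec.span (\<Union>j\<le>e. E j) = UNIV"
    and E_nonzero: "\<And>j. j \<le> e \<Longrightarrow> E j \<noteq> {0}"
    and E_independent: "\<And>j. j \<le> e \<Longrightarrow> E j \<inter> vec.span (\<Union>k\<in>{Suc j..e}. E k) = {0}"
    and E_top: "E (Suc e) = {0}"
    and shift_E: "\<And>j v. j \<le> e \<Longrightarrow> v \<in> E j \<Longrightarrow> (A - mat (\<theta> j)) *v v \<in> E (Suc j)"
    and inj_\<theta>: "inj_on \<theta> {..e}"
begin

definition flag :: "nat \<Rightarrow> ('k^'n) set" where
  "flag j = vec.span (\<Union>k\<in>{j..e}. E k)"

definition eigenflag :: "nat \<Rightarrow> ('k^'n) set" where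
  "eigenflag j = vec.span (\<Union>k\<in>{j..e}. eigenspace A (\<theta> k))"

lemma flag_antimono: "i \<le> j \<Longrightarrow> flag j \<subseteq> flag i"
  unfolding flag_def by (intro vec.span_mono UN_mono) auto

lemma eigenflag_antimono: "i \<le> j \<Longrightarrow> eigenflag j \<subseteq> eigenflag i"
  unfolding eigenflag_def by (intro vec.span_mono UN_mono) auto

lemma E_subset_flag:
  assumes "j \<le> Suc e" shows "E j \<subseteq> flag j"
proof (cases "j = Suc e")
  case True
  with E_top show ?thesis
    by (simp add: flag_def vec.span_zero)
next
  case False
  with assms have "E j \<subseteq> (\<Union>k\<in>{j..e}. E k)"
    by (intro UN_upper) auto
  then show ?thesis
    unfolding flag_def using vec.span_superset by blast
qed

lemma flag_Suc: "j \<le> e \<Longrightarrow> flag j = vec.span (E j \<union> (\<Union>k\<in>{Suc j..e}. E k))"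
  by (simp add: flag_def Icc_eq_insert_lb_nat)

text \<open>Since \<open>A - \<theta> j\<close> maps \<open>eigenflag (Suc j)\<close> onto itself, every \<open>v \<in> E j\<close> differs from an
  eigenvector for \<open>\<theta> j\<close> by an element of \<open>eigenflag (Suc j)\<close>.\<close>
lemma flag_subset_eigenflag: "j \<le> Suc e \<Longrightarrow> flag j \<subseteq> eigenflag j"
proof (induction j rule: inc_induct)
  case base
  show ?case
    by (simp add: flag_def eigenflag_def vec.span_zero)
next
  case (step j)
  then have j: "j \<le> e" by simp
  have "E j \<subseteq> eigenflag j"
  proof
    fix v assume v: "v \<in> E j"
    have "\<theta> j \<notin> \<theta> ` {Suc j..e}"
      using inj_on_eq_iff[OF inj_\<theta>] j by fastforce
    moreover have "(A - mat (\<theta> j)) *v v \<in> eigenflag (Suc j)"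
      using shift_E[OF j v] E_subset_flag[of "Suc j"] step.IH j by blast
    ultimately obtain y where y: "y \<in> eigenflag (Suc j)" "(A - mat (\<theta> j)) *v y = (A - mat (\<theta> j)) *v v"
      using span_eigenspaces_shift_onto[of "\<theta> ` {Suc j..e}" "\<theta> j"]
      unfolding eigenflag_def image_image by blast
    then have "v - y \<in> eigenspace A (\<theta> j)"
      by (simp add: eigenspace_eq_kernel vec.diff)
    then have "v - y \<in> eigenflag j"
      unfolding eigenflag_def using j by (intro vec.span_base) auto
    moreover have "y \<in> eigenflag j"
      using y(1) eigenflag_antimono[of j "Suc j"] by auto
    ultimately have "(v - y) + y \<in> eigenflag j"
      unfolding eigenflag_def by (rule vec.span_add)
    then show "v \<in> eigenflag j"
      by simp
  qed
  moreover have "(\<Union>k\<in>{Suc j..e}. E k) \<subseteq> flag (Suc j)"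
    unfolding flag_def by (rule vec.span_superset)
  with step.IH eigenflag_antimono[of j "Suc j"] have "(\<Union>k\<in>{Suc j..e}. E k) \<subseteq> eigenflag j"
    by simp
  ultimately show ?case
    unfolding flag_Suc[OF j] by (intro vec.span_minimal) (auto simp: eigenflag_def)
qed

lemma span_eigenspaces: "vec.span (\<Union>k\<le>e. eigenspace A (\<theta> k)) = UNIV"
  using flag_subset_eigenflag[of 0] span_E
  by (auto simp: flag_def eigenflag_def atLeast0AtMost)

lemma flag_shift:
  assumes "j \<le> e" shows "(\<lambda>x. (A - mat (\<theta> j)) *v x) ` flag j \<subseteq> flag (Suc j)"
proof -
  have "(A - mat (\<theta> j)) *v v \<in> flag (Suc j)" if k: "k \<in> {j..e}" and v: "v \<in> E k" for k v
  proof -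
    have "(A - mat (\<theta> j)) *v v = (A - mat (\<theta> k)) *v v + (\<theta> k - \<theta> j) *s v"
      by (simp add: matrix_vector_mult_diff_rdistrib mat_mult_vec vector_sub_rdistrib)
    moreover have "(A - mat (\<theta> k)) *v v \<in> flag (Suc j)"
      using shift_E[OF _ v] E_subset_flag[of "Suc k"] flag_antimono[of "Suc j" "Suc k"] k by auto
    moreover have "(\<theta> k - \<theta> j) *s v \<in> flag (Suc j)"
    proof (cases "k = j")
      case False
      with k v have "v \<in> flag (Suc j)"
        unfolding flag_def by (intro vec.span_base) auto
      then show ?thesis
        unfolding flag_def by (rule vec.span_scale)
    qed (simp add: flag_def vec.span_zero)
    ultimately show ?thesis
      unfolding flag_def by (simp add: vec.span_add)
  qed
  then show ?thesis
    unfolding flag_def vec.span_image[symmetric] by (intro vec.span_minimal) auto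
qed

text \<open>\<open>A - \<theta> j\<close> maps \<open>flag j\<close> into the proper subspace \<open>flag (Suc j)\<close>, so it is not injective.\<close>
lemma eigenvalue_\<theta>:
  assumes j: "j \<le> e" shows "is_eigenvalue A (\<theta> j)"
proof (rule ccontr)
  let ?T = "\<lambda>x. (A - mat (\<theta> j)) *v x"
  assume "\<not> is_eigenvalue A (\<theta> j)"
  then have "inj ?T"
    by (auto simp: vec.linear_inj_iff_eq_0 is_eigenvalue_def eigenspace_eq_kernel)
  then have "vec.dim (flag j) = vec.dim (?T ` flag j)"
    by (simp add: vec.dim_image_eq inj_on_subset)
  also have "\<dots> \<le> vec.dim (flag (Suc j))"
    using flag_shift[OF j] by (rule vec.dim_subset)
  finally have "flag (Suc j) = flag j"
    using flag_antimono[of j "Suc j"] by (intro vec.subspace_dim_equal) (auto simp: flag_def)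
  then have "E j \<subseteq> E j \<inter> flag (Suc j)"
    using E_subset_flag[of j] j by auto
  then have "E j \<subseteq> {0}"
    using E_independent[OF j] unfolding flag_def by simp
  moreover have "0 \<in> E j"
    using subspace_E[OF j] by (rule vec.subspace_0)
  ultimately show False
    using E_nonzero[OF j] by blast
qed

theorem diagonalizable_with_diagonal_spectrum: "diagonalizable_spectrum A (\<theta> ` {..e})"
  using span_eigenspaces eigenvalue_\<theta>
  by (intro diagonalizable_spectrumI) (auto simp: image_image)

end

lemma diagonalizable_spectrum_weight_shift:
  fixes K Y :: "'k::field^'n^'n" and \<omega> :: "nat \<Rightarrow> 'k"
  assumes K: "diagonalizable_spectrum K (\<omega> ` {..e})" and inj: "inj_on \<omega> {..Suc e}"
    and "a \<noteq> 0"
    and shift: "\<And>j v. j \<le> e \<Longrightarrow> v \<in> eigenspace K (\<omega> j) \<Longrightarrow>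
                  Y *v v - inverse (\<omega> j) *s v \<in> eigenspace K (\<omega> (Suc j))"
  shows "diagonalizable_spectrum (mat a ** Y) ((\<lambda>j. a / \<omega> j) ` {..e})"
proof -
  have eigenvalues: "{\<mu>. is_eigenvalue K \<mu>} = \<omega> ` {..e}"
    using K by (simp add: diagonalizable_spectrum_def)
  interpret upper_triangular "mat a ** Y" "\<lambda>j. eigenspace K (\<omega> j)" "\<lambda>j. a / \<omega> j" e
  proof
    show "vec.subspace (eigenspace K (\<omega> j))" for j
      by (rule subspace_eigenspace)
    show "vec.span (\<Union>j\<le>e. eigenspace K (\<omega> j)) = UNIV"
      using diagonalizable_spectrum_span[OF K] by (simp add: image_image)
    show "eigenspace K (\<omega> j) \<noteq> {0}" if "j \<le> e" for j
      using eigenvalues that by (auto simp: is_eigenvalue_def)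
    show "eigenspace K (\<omega> j) \<inter> vec.span (\<Union>k\<in>{Suc j..e}. eigenspace K (\<omega> k)) = {0}" if "j \<le> e" for j
    proof -
      have "\<omega> j \<notin> \<omega> ` {Suc j..e}"
        using inj_on_eq_iff[OF inj] that by fastforce
      then show ?thesis
        using eigenspace_inter_span_eigenspaces[of "\<omega> ` {Suc j..e}" "\<omega> j" K] by (simp add: image_image)
    qed
    have "\<omega> (Suc e) \<notin> \<omega> ` {..e}"
      using inj_on_eq_iff[OF inj] by fastforce
    then show "eigenspace K (\<omega> (Suc e)) = {0}"
      using eigenvalues unfolding is_eigenvalue_def by blast
    show "(mat a ** Y - mat (a / \<omega> j)) *v v \<in> eigenspace K (\<omega> (Suc j))"
      if "j \<le> e" and "v \<in> eigenspace K (\<omega> j)" for j v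
    proof -
      have "(mat a ** Y - mat (a / \<omega> j)) *v v = a *s (Y *v v - inverse (\<omega> j) *s v)" (is "_ = ?x")
        by (simp add: matrix_vector_mult_diff_rdistrib mat_scaled_mult_vec mat_mult_vec
            vector_ssub_ldistrib vector_smult_assoc divide_inverse)
      moreover have "?x \<in> eigenspace K (\<omega> (Suc j))"
        by (rule vec.subspace_scale[OF subspace_eigenspace shift[OF that]])
      ultimately show ?thesis
        by simp
    qed
    show "inj_on (\<lambda>j. a / \<omega> j) {..e}"
      using inj_on_eq_iff[OF inj] \<open>a \<noteq> 0\<close> by (auto simp: inj_on_def)
  qed
  show ?thesis
    by (rule diagonalizable_with_diagonal_spectrum)
qed

section \<open>Weight-shifting generators\<close>

lemma qcomm_mult_vec:
  "qcomm q X Y *v v = inverse (q - inverse q) *s (q *s (X *v (Y *v v)) - inverse q *s (Y *v (X *v v)))"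
  unfolding qcomm_def
  by (simp add: mat_scaled_mult_vec mat_mult_vec matrix_vector_mul_assoc[symmetric] matrix_vector_mult_diff_rdistrib)

lemma qcomm_eq_1_mult_vec:
  fixes q :: "'k::field"
  assumes "q \<noteq> 0" and "q - inverse q \<noteq> 0" and "qcomm q X Y = mat 1"
  shows "q\<^sup>2 *s (X *v (Y *v v)) - Y *v (X *v v) = (q\<^sup>2 - 1) *s v"
proof -
  have "qcomm q X Y *v v = v"
    using assms(3) by simp
  then have "inverse (q - inverse q) * (q * (X *v (Y *v v)) $ i - inverse q * (Y *v (X *v v)) $ i) = v $ i" for i
    by (simp add: qcomm_mult_vec vec_eq_iff right_diff_distrib mult.assoc)
  then have "q * (q\<^sup>2 * (X *v (Y *v v)) $ i - (Y *v (X *v v)) $ i) = q * ((q\<^sup>2 - 1) * v $ i)" for i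
    using assms(1,2) by (simp add: field_simps power2_eq_square)
  then show ?thesis
    using assms(1) by (simp add: vec_eq_iff left_diff_distrib)
qed

lemma qcomm_lowering_shift:
  fixes q \<omega> :: "'k::field"
  assumes "q \<noteq> 0" and "q - inverse q \<noteq> 0" and "\<omega> \<noteq> 0"
    and "qcomm q K Y = mat 1" and "K *v v = \<omega> *s v"
  shows "Y *v v - inverse \<omega> *s v \<in> eigenspace K (\<omega> / q\<^sup>2)"
proof -
  have "q\<^sup>2 * (K *v (Y *v v)) $ i - \<omega> * (Y *v v) $ i = (q\<^sup>2 - 1) * v $ i" for i
    using qcomm_eq_1_mult_vec[OF assms(1,2,4), of v] assms(5) by (simp add: vec.scale vec_eq_iff left_diff_distrib)
  then show ?thesis
    using assms(1,3,5) by (simp add: vec.diff vec.scale vec_eq_iff field_simps)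
qed

lemma qcomm_raising_shift:
  fixes q \<omega> :: "'k::field"
  assumes "q \<noteq> 0" and "q - inverse q \<noteq> 0" and "\<omega> \<noteq> 0"
    and "qcomm q Y K = mat 1" and "K *v v = \<omega> *s v"
  shows "Y *v v - inverse \<omega> *s v \<in> eigenspace K (q\<^sup>2 * \<omega>)"
proof -
  have "q\<^sup>2 * \<omega> * (Y *v v) $ i - (K *v (Y *v v)) $ i = (q\<^sup>2 - 1) * v $ i" for i
    using qcomm_eq_1_mult_vec[OF assms(1,2,4), of v] assms(5) by (simp add: vec.scale vec_eq_iff left_diff_distrib)
  then show ?thesis
    using assms(1,3,5) by (simp add: vec.diff vec.scale vec_eq_iff field_simps)
qed

lemma q_minus_inverse_nonzero:
  fixes q :: "'k::field"
  assumes "q \<noteq> 0" and "not_root_of_unity q"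
  shows "q - inverse q \<noteq> 0"
proof
  assume "q - inverse q = 0"
  with assms(1) have "q ^ 2 = 1"
    by (simp add: power2_eq_square field_simps)
  with assms(2) show False
    unfolding not_root_of_unity_def by (metis zero_less_numeral)
qed

lemma power_int_eq_iff_not_root_of_unity:
  fixes q :: "'k::field"
  assumes "q \<noteq> 0" and "not_root_of_unity q"
  shows "q powi m = q powi n \<longleftrightarrow> m = n"
proof
  assume eq: "q powi m = q powi n"
  show "m = n"
  proof (rule ccontr)
    assume "m \<noteq> n"
    then obtain i j where ij: "i < j" "q powi i = q powi j"
      using eq by (metis linorder_neqE)
    then have "q ^ nat (j - i) = 1"
      using assms(1) by (simp add: power_int_diff flip: power_int_of_nat)
    with ij(1) assms(2) show False
      unfolding not_root_of_unity_def by (metis zero_less_nat_eq diff_gt_0_iff_gt)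
  qed
qed simp

lemma image_atMost_reverse: "(\<lambda>j. f (e - j)) ` {..e} = f ` {..e::nat}"
proof
  show "f ` {..e} \<subseteq> (\<lambda>j. f (e - j)) ` {..e}"
  proof
    fix x assume "x \<in> f ` {..e}"
    then obtain i where "i \<le> e" "x = f i" by auto
    then show "x \<in> (\<lambda>j. f (e - j)) ` {..e}"
      by (intro image_eqI[of _ _ "e - i"]) auto
  qed
qed auto

lemma image_q_string_reverse:
  "(\<lambda>j. f (int e - 2 * int j)) ` {..e} = (\<lambda>j. f (2 * int j - int e)) ` {..e}"
proof -
  have "(\<lambda>j. f (int e - 2 * int j)) ` {..e} = (\<lambda>j. f (2 * int (e - j) - int e)) ` {..e}"
    by (intro image_cong) (auto simp: of_nat_diff)
  then show ?thesis
    using image_atMost_reverse[of "\<lambda>j. f (2 * int j - int e)" e] by simp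
qed

definition weights :: "'k::field \<Rightarrow> nat \<Rightarrow> 'k set" where
  "weights q e = (\<lambda>j. q powi (2 * int j - int e)) ` {..e}"

lemma lowering_operator_spectrum:
  fixes q a :: "'k::field"
  assumes "q \<noteq> 0" and "not_root_of_unity q" and "a \<noteq> 0"
    and "qcomm q K Y = mat 1" and K: "diagonalizable_spectrum K (weights q e)"
  shows "diagonalizable_spectrum (mat a ** Y) ((\<lambda>j. a * q powi (2 * int j - int e)) ` {..e})"
proof -
  define \<omega> where "\<omega> j = q powi (int e - 2 * int j)" for j
  have "diagonalizable_spectrum (mat a ** Y) ((\<lambda>j. a / \<omega> j) ` {..e})"
  proof (rule diagonalizable_spectrum_weight_shift)
    show "diagonalizable_spectrum K (\<omega> ` {..e})"
      using K by (simp add: weights_def \<omega>_def image_q_string_reverse[of "power_int q"])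
    show "inj_on \<omega> {..Suc e}"
      using power_int_eq_iff_not_root_of_unity[OF assms(1,2)] by (auto simp: inj_on_def \<omega>_def)
    show "Y *v v - inverse (\<omega> j) *s v \<in> eigenspace K (\<omega> (Suc j))"
      if "v \<in> eigenspace K (\<omega> j)" for j v
    proof -
      have "\<omega> (Suc j) = \<omega> j / q\<^sup>2"
        using assms(1) power_int_diff[of q "int e - 2 * int j" 2] by (simp add: \<omega>_def algebra_simps)
      moreover have "Y *v v - inverse (\<omega> j) *s v \<in> eigenspace K (\<omega> j / q\<^sup>2)"
        using that assms(1)
        by (intro qcomm_lowering_shift[OF assms(1) q_minus_inverse_nonzero[OF assms(1,2)] _ assms(4)])
          (simp_all add: \<omega>_def)
      ultimately show ?thesis
        by (simp only:)
    qed
  qed (rule assms(3))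
  moreover have "a / \<omega> j = a * q powi (2 * int j - int e)" for j
    by (simp add: \<omega>_def divide_inverse flip: power_int_minus)
  ultimately show ?thesis
    by simp
qed

lemma raising_operator_spectrum:
  fixes q a :: "'k::field"
  assumes "q \<noteq> 0" and "not_root_of_unity q" and "a \<noteq> 0"
    and "qcomm q Y K = mat 1" and K: "diagonalizable_spectrum K (weights q e)"
  shows "diagonalizable_spectrum (mat a ** Y) ((\<lambda>j. a * q powi (2 * int j - int e)) ` {..e})"
proof -
  define \<omega> where "\<omega> j = q powi (2 * int j - int e)" for j
  have "diagonalizable_spectrum (mat a ** Y) ((\<lambda>j. a / \<omega> j) ` {..e})"
  proof (rule diagonalizable_spectrum_weight_shift)
    show "diagonalizable_spectrum K (\<omega> ` {..e})"
      using K by (simp add: weights_def \<omega>_def)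
    show "inj_on \<omega> {..Suc e}"
      using power_int_eq_iff_not_root_of_unity[OF assms(1,2)] by (auto simp: inj_on_def \<omega>_def)
    show "Y *v v - inverse (\<omega> j) *s v \<in> eigenspace K (\<omega> (Suc j))"
      if "v \<in> eigenspace K (\<omega> j)" for j v
    proof -
      have "\<omega> (Suc j) = q\<^sup>2 * \<omega> j"
        using assms(1) power_int_add[of q 2 "2 * int j - int e"] by (simp add: \<omega>_def algebra_simps)
      moreover have "Y *v v - inverse (\<omega> j) *s v \<in> eigenspace K (q\<^sup>2 * \<omega> j)"
        using that assms(1)
        by (intro qcomm_raising_shift[OF assms(1) q_minus_inverse_nonzero[OF assms(1,2)] _ assms(4)])
          (simp_all add: \<omega>_def)
      ultimately show ?thesis
        by (simp only:)
    qed
  qed (rule assms(3))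
  moreover have "(\<lambda>j. a / \<omega> j) ` {..e} = (\<lambda>j. a * q powi (2 * int j - int e)) ` {..e}"
    using image_q_string_reverse[of "\<lambda>m. a * q powi m" e]
    by (simp add: \<omega>_def divide_inverse minus_diff_eq flip: power_int_minus)
  ultimately show ?thesis
    by simp
qed

lemma diagonalizable_spectrum_of_decomposition:
  fixes K :: "'k::field^'n^'n" and U :: "nat \<Rightarrow> ('k^'n) set"
  assumes sum: "\<And>v. \<exists>u. (\<forall>i\<le>e. u i \<in> U i) \<and> v = (\<Sum>i\<le>e. u i)"
    and "\<And>i. i \<le> e \<Longrightarrow> vec.subspace (U i)" and "\<And>i. i \<le> e \<Longrightarrow> U i \<noteq> {0}"
    and U: "\<And>i. i \<le> e \<Longrightarrow> U i \<subseteq> eigenspace K (\<omega> i)"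
  shows "diagonalizable_spectrum K (\<omega> ` {..e})"
proof -
  have "UNIV \<subseteq> vec.span (\<Union>\<mu>\<in>\<omega> ` {..e}. eigenspace K \<mu>)"
  proof
    fix v :: "'k^'n"
    obtain u where u: "\<forall>i\<le>e. u i \<in> U i" and v: "v = (\<Sum>i\<le>e. u i)"
      using sum by blast
    have "u i \<in> (\<Union>\<mu>\<in>\<omega> ` {..e}. eigenspace K \<mu>)" if "i \<le> e" for i
      using u U that by blast
    then show "v \<in> vec.span (\<Union>\<mu>\<in>\<omega> ` {..e}. eigenspace K \<mu>)"
      unfolding v by (intro vec.span_sum vec.span_base) (simp del: mem_eigenspace)
  qed
  moreover have "is_eigenvalue K (\<omega> i)" if i: "i \<le> e" for i
  proof -
    obtain u where "u \<in> U i" "u \<noteq> 0"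
      using assms(2,3)[OF i] vec.subspace_0 by blast
    with U[OF i] show ?thesis
      by (auto simp: is_eigenvalue_def)
  qed
  ultimately show ?thesis
    by (intro diagonalizable_spectrumI) auto
qed

lemma has_type_weights:
  fixes q :: "'k::field"
  assumes "has_type q K 1 1"
  obtains e where "diagonalizable_spectrum (K 0) (weights q e)"
    and "diagonalizable_spectrum (K 1) (weights q e)"
proof -
  obtain e U where U: "\<forall>i\<le>e. vec.subspace (U i) \<and> U i \<noteq> {0}"
    and sum: "\<forall>v. \<exists>u. (\<forall>i\<le>e. u i \<in> U i) \<and> v = (\<Sum>i\<le>e. u i)"
    and K: "\<forall>i\<le>e. \<forall>v\<in>U i. K 0 *v v = q powi (2 * int i - int e) *s v \<and>
                           K 1 *v v = q powi (int e - 2 * int i) *s v"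
    using assms unfolding has_type_def by auto
  have "diagonalizable_spectrum (K 0) ((\<lambda>i. q powi (2 * int i - int e)) ` {..e})"
    using sum U K by (intro diagonalizable_spectrum_of_decomposition[where U = U]) auto
  moreover have "diagonalizable_spectrum (K 1) ((\<lambda>i. q powi (int e - 2 * int i)) ` {..e})"
    using sum U K by (intro diagonalizable_spectrum_of_decomposition[where U = U]) auto
  ultimately show ?thesis
    using that by (simp add: weights_def image_q_string_reverse[of "power_int q"])
qed

section \<open>The q-Serre relation and tridiagonality\<close>

lemma serre_mult_vec:
  "serre q X Y *v v = X *v (X *v (X *v (Y *v v))) - qint3 q *s (X *v (X *v (Y *v (X *v v))))
     + qint3 q *s (X *v (Y *v (X *v (X *v v)))) - Y *v (X *v (X *v (X *v v)))"
  by (simp add: serre_def mat_scaled_mult_vec mat_mult_vec matrix_vector_mul_assoc[symmetric]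
      matrix_vector_mult_diff_rdistrib matrix_vector_mult_add_rdistrib)

lemma serre_scale:
  fixes a b :: "'k::field"
  assumes "serre q X Y = 0"
  shows "serre q (mat a ** X) (mat b ** Y) = 0"
proof -
  have "serre q (mat a ** X) (mat b ** Y) *v v = (a ^ 3 * b) *s (serre q X Y *v v)" for v
    by (simp add: serre_mult_vec mat_scaled_mult_vec vec.scale vector_smult_assoc vector_ssub_ldistrib
        vector_add_ldistrib mult_ac power3_eq_cube)
  with assms show ?thesis
    by (simp add: matrix_eq)
qed

lemma qint3_cubic_factor:
  fixes q x y :: "'k::field"
  assumes "q \<noteq> 0" and "q - inverse q \<noteq> 0"
  shows "x ^ 3 - qint3 q * x\<^sup>2 * y + qint3 q * x * y\<^sup>2 - y ^ 3 = (x - y) * (x - q\<^sup>2 * y) * (x - y / q\<^sup>2)"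
proof -
  have qint3: "qint3 q = q\<^sup>2 + 1 + 1 / q\<^sup>2"
    using assms by (simp add: qint3_def field_simps power2_eq_square power3_eq_cube)
  show ?thesis
    unfolding qint3 using assms(1) by (simp add: field_simps power2_eq_square power3_eq_cube)
qed

lemma mult_vec_sum_eigenvectors:
  assumes "\<And>\<mu>. \<mu> \<in> \<Lambda> \<Longrightarrow> w \<mu> \<in> eigenspace A \<mu>"
  shows "A *v (\<Sum>\<mu>\<in>\<Lambda>. f \<mu> *s w \<mu>) = (\<Sum>\<mu>\<in>\<Lambda>. (\<mu> * f \<mu>) *s w \<mu>)"
  using assms by (simp add: vec.sum vec.scale vector_smult_assoc mult.commute)

lemma sum_neighbours_mem_Esp:
  fixes A :: "'k::field^'n^'n"
  assumes i: "i \<le> d" and W: "\<And>k. k \<le> d \<Longrightarrow> W k \<in> eigenspace A (\<theta> k)"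
    and support: "\<And>k. k \<le> d \<Longrightarrow> W k \<noteq> 0 \<Longrightarrow> Suc k = i \<or> k = i \<or> k = Suc i"
  shows "(\<Sum>k\<le>d. W k) \<in> {x + y + z | x y z. x \<in> Esp A d \<theta> (int i - 1) \<and> y \<in> Esp A d \<theta> (int i)
                                               \<and> z \<in> Esp A d \<theta> (int i + 1)}"
proof -
  let ?x = "\<Sum>k\<le>d. if Suc k = i then W k else 0"
  let ?y = "\<Sum>k\<le>d. if k = i then W k else 0"
  let ?z = "\<Sum>k\<le>d. if k = Suc i then W k else 0"
  have "(\<Sum>k\<le>d. W k) = ?x + ?y + ?z"
    unfolding sum.distrib[symmetric] using support by (intro sum.cong) auto
  moreover have "?x \<in> Esp A d \<theta> (int i - 1)"
  proof (cases i)
    case (Suc j)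
    with i W[of j] show ?thesis
      by (simp add: Esp_def)
  qed (simp add: Esp_def)
  moreover have "?y \<in> Esp A d \<theta> (int i)"
    using i W by (simp add: Esp_def)
  moreover have "?z \<in> Esp A d \<theta> (int i + 1)"
    using W[of "Suc i"] by (simp add: Esp_def nat_add_distrib)
  ultimately show ?thesis
    by blast
qed

lemma serre_eigencomponents:
  fixes A B :: "'k::field^'n^'n" and q :: 'k
  assumes q: "q \<noteq> 0" "q - inverse q \<noteq> 0" and serre: "serre q A B = 0" and v: "A *v v = \<nu> *s v"
    and w: "\<And>\<mu>. \<mu> \<in> \<Lambda> \<Longrightarrow> w \<mu> \<in> eigenspace A \<mu>" and Bv: "B *v v = (\<Sum>\<mu>\<in>\<Lambda>. w \<mu>)"
    and "finite \<Lambda>" and "\<mu> \<in> \<Lambda>" and "w \<mu> \<noteq> 0"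
  shows "\<mu> \<in> {\<nu>, q\<^sup>2 * \<nu>, \<nu> / q\<^sup>2}"
proof -
  define p where "p \<mu> = (\<mu> - \<nu>) * (\<mu> - q\<^sup>2 * \<nu>) * (\<mu> - \<nu> / q\<^sup>2)" for \<mu>
  have Bv1: "B *v v = (\<Sum>\<mu>\<in>\<Lambda>. 1 *s w \<mu>)"
    using Bv by simp
  have "0 = serre q A B *v v"
    using serre by simp
  also have "\<dots> = A *v (A *v (A *v (B *v v))) - (qint3 q * \<nu>) *s (A *v (A *v (B *v v)))
                   + (qint3 q * \<nu> ^ 2) *s (A *v (B *v v)) - \<nu> ^ 3 *s (B *v v)"
    using v by (simp add: serre_mult_vec vec.scale vector_smult_assoc power2_eq_square power3_eq_cube mult_ac)
  also have "\<dots> = (\<Sum>\<mu>\<in>\<Lambda>. (\<mu> * (\<mu> * (\<mu> * 1))) *s w \<mu>)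
                   - (qint3 q * \<nu>) *s (\<Sum>\<mu>\<in>\<Lambda>. (\<mu> * (\<mu> * 1)) *s w \<mu>)
                   + (qint3 q * \<nu> ^ 2) *s (\<Sum>\<mu>\<in>\<Lambda>. (\<mu> * 1) *s w \<mu>)
                   - \<nu> ^ 3 *s (\<Sum>\<mu>\<in>\<Lambda>. 1 *s w \<mu>)"
    by (simp only: mult_vec_sum_eigenvectors[OF w] Bv1)
  also have "\<dots> = (\<Sum>\<mu>\<in>\<Lambda>. (\<mu> ^ 3 - qint3 q * \<mu>\<^sup>2 * \<nu> + qint3 q * \<mu> * \<nu>\<^sup>2 - \<nu> ^ 3) *s w \<mu>)"
    by (simp add: vec.scale_sum_right sum_subtractf sum.distrib vector_smult_assoc vector_sub_rdistrib
        vector_sadd_rdistrib power2_eq_square power3_eq_cube mult_ac)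
  also have "\<dots> = (\<Sum>\<mu>\<in>\<Lambda>. p \<mu> *s w \<mu>)"
    by (simp add: p_def qint3_cubic_factor[OF q])
  finally have "(\<Sum>\<mu>\<in>\<Lambda>. p \<mu> *s w \<mu>) = 0"
    by (rule sym)
  with \<open>finite \<Lambda>\<close> w have "\<forall>\<mu>\<in>\<Lambda>. p \<mu> *s w \<mu> = 0"
    by (intro eigenvectors_sum_eq_0[where A = A]) (auto simp: vec.scale vector_smult_assoc mult.commute)
  with \<open>\<mu> \<in> \<Lambda>\<close> \<open>w \<mu> \<noteq> 0\<close> have "p \<mu> = 0"
    by auto
  then show ?thesis
    by (auto simp: p_def)
qed

lemma standard_ordering_serre:
  fixes A B :: "'k::field^'n^'n" and q :: 'k
  assumes A: "diagonalizable_spectrum A (\<theta> ` {..d})" and inj: "inj_on \<theta> {..d}"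
    and q: "q \<noteq> 0" "q - inverse q \<noteq> 0" and serre: "serre q A B = 0"
    and neighbours: "\<And>i k. i \<le> d \<Longrightarrow> k \<le> d \<Longrightarrow> \<theta> k \<in> {\<theta> i, q\<^sup>2 * \<theta> i, \<theta> i / q\<^sup>2} \<Longrightarrow>
                        Suc k = i \<or> k = i \<or> k = Suc i"
  shows "standard_ordering A B d \<theta>"
  unfolding standard_ordering_def
proof (intro conjI allI impI ballI)
  show "inj_on \<theta> {0..d}" and "\<theta> ` {0..d} = {\<mu>. is_eigenvalue A \<mu>}"
    using inj A by (simp_all add: atLeast0AtMost diagonalizable_spectrum_def)
  fix i v assume i: "i \<le> d" and v: "v \<in> eigenspace A (\<theta> i)"
  obtain w where w: "\<And>\<mu>. \<mu> \<in> \<theta> ` {..d} \<Longrightarrow> w \<mu> \<in> eigenspace A \<mu>"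
    and Bv: "B *v v = (\<Sum>\<mu>\<in>\<theta> ` {..d}. w \<mu>)"
    using span_UN_subspaces_sum[where E = "eigenspace A", OF _ subspace_eigenspace]
      diagonalizable_spectrum_span[OF A] by blast
  have "Suc k = i \<or> k = i \<or> k = Suc i" if "k \<le> d" and "w (\<theta> k) \<noteq> 0" for k
    using serre_eigencomponents[OF q serre _ w Bv] v that neighbours[OF i that(1)] by simp
  moreover have "w (\<theta> k) \<in> eigenspace A (\<theta> k)" if "k \<le> d" for k
    using w that by blast
  moreover have "B *v v = (\<Sum>k\<le>d. w (\<theta> k))"
    unfolding Bv sum.reindex[OF inj] by simp
  ultimately show "B *v v \<in> {x + y + z | x y z. x \<in> Esp A d \<theta> (int i - 1) \<and> y \<in> Esp A d \<theta> (int i)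
                                            \<and> z \<in> Esp A d \<theta> (int i + 1)}"
    using sum_neighbours_mem_Esp[OF i, of "\<lambda>k. w (\<theta> k)" A \<theta>] by simp
qed

lemma standard_ordering_q_string:
  fixes q b :: "'k::field" and c \<delta> :: int
  assumes q: "q \<noteq> 0" "not_root_of_unity q" and "b \<noteq> 0" and \<delta>: "\<delta> = 2 \<or> \<delta> = -2"
    and \<theta>: "\<And>k. \<theta> k = b * q powi (c + \<delta> * int k)"
    and A: "diagonalizable_spectrum A (\<theta> ` {..d})" and serre: "serre q A B = 0"
  shows "standard_ordering A B d \<theta>"
proof (rule standard_ordering_serre[OF A _ q(1) q_minus_inverse_nonzero[OF q] serre])
  have \<theta>_eq: "\<theta> k = \<theta> i \<longleftrightarrow> c + \<delta> * int k = c + \<delta> * int i" for i k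
    using \<open>b \<noteq> 0\<close> by (simp add: \<theta> power_int_eq_iff_not_root_of_unity[OF q])
  show "inj_on \<theta> {..d}"
    using \<delta> by (auto simp: inj_on_def \<theta>_eq)
  fix i k
  have "q\<^sup>2 * \<theta> i = b * q powi (c + \<delta> * int i + 2)" and "\<theta> i / q\<^sup>2 = b * q powi (c + \<delta> * int i - 2)"
    using q(1) by (simp_all add: \<theta> power_int_add power_int_diff)
  moreover assume "\<theta> k \<in> {\<theta> i, q\<^sup>2 * \<theta> i, \<theta> i / q\<^sup>2}"
  ultimately have "c + \<delta> * int k \<in> {c + \<delta> * int i, c + \<delta> * int i + 2, c + \<delta> * int i - 2}"
    using \<open>b \<noteq> 0\<close> by (auto simp: \<theta> power_int_eq_iff_not_root_of_unity[OF q])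
  with \<delta> show "Suc k = i \<or> k = i \<or> k = Suc i"
    by auto
qed

lemma diameter_standard_ordering:
  assumes "standard_ordering A B d \<theta>"
  shows "diameter A = d"
proof -
  have "inj_on \<theta> {0..d}" and eigenvalues: "\<theta> ` {0..d} = {\<mu>. is_eigenvalue A \<mu>}"
    using assms by (simp_all add: standard_ordering_def)
  then show ?thesis
    unfolding diameter_def eigenvalues[symmetric] by (simp add: card_image)
qed

lemma generator_pair_spectra:
  fixes q a as :: "'k::field"
  assumes U: "U_module q Yp Ym K Ki" and q: "q \<noteq> 0" "not_root_of_unity q" and "a \<noteq> 0" "as \<noteq> 0"
    and K0: "diagonalizable_spectrum (K 0) (weights q e)"
    and K1: "diagonalizable_spectrum (K 1) (weights q e)"
    and pair: "(A = mat a ** Ym 1 \<and> As = mat as ** Ym 0) \<or> (A = mat a ** Yp 0 \<and> As = mat as ** Yp 1)"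
  shows "diagonalizable_spectrum A ((\<lambda>j. a * q powi (2 * int j - int e)) ` {..e})
    \<and> diagonalizable_spectrum As ((\<lambda>j. as * q powi (2 * int j - int e)) ` {..e})
    \<and> serre q A As = 0 \<and> serre q As A = 0"
proof -
  have rel: "qcomm q (K 0) (Ym 0) = mat 1" "qcomm q (K 1) (Ym 1) = mat 1"
    "qcomm q (Yp 0) (K 0) = mat 1" "qcomm q (Yp 1) (K 1) = mat 1"
    "serre q (Ym 1) (Ym 0) = 0" "serre q (Ym 0) (Ym 1) = 0"
    "serre q (Yp 0) (Yp 1) = 0" "serre q (Yp 1) (Yp 0) = 0"
    using U unfolding U_module_def by simp_all
  from pair show ?thesis
  proof
    assume "A = mat a ** Ym 1 \<and> As = mat as ** Ym 0"
    with lowering_operator_spectrum[OF q \<open>a \<noteq> 0\<close> rel(2) K1]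
      lowering_operator_spectrum[OF q \<open>as \<noteq> 0\<close> rel(1) K0] show ?thesis
      using serre_scale[OF rel(5)] serre_scale[OF rel(6)] by simp
  next
    assume "A = mat a ** Yp 0 \<and> As = mat as ** Yp 1"
    with raising_operator_spectrum[OF q \<open>a \<noteq> 0\<close> rel(3) K0]
      raising_operator_spectrum[OF q \<open>as \<noteq> 0\<close> rel(4) K1] show ?thesis
      using serre_scale[OF rel(7)] serre_scale[OF rel(8)] by simp
  qed
qed

theorem lemma15p1:
  fixes q a as :: "'k::alg_closed_field"
    and Yp Ym K Ki :: "nat \<Rightarrow> 'k^'n^'n"
    and A As :: "'k^'n^'n"
  assumes "q \<noteq> 0" and "not_root_of_unity q"
    and "a \<noteq> 0" and "as \<noteq> 0"
    and "(A = mat a ** Ym 1 \<and> As = mat as ** Ym 0) \<or> (A = mat a ** Yp 0 \<and> As = mat as ** Yp 1)"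
    and "U_module q Yp Ym K Ki"
    and "U_irreducible Yp Ym K Ki"
    and "has_type q K 1 1"
    and "\<forall>W. vec.subspace W \<and> invariant A W \<and> invariant As W \<longrightarrow> W = {0} \<or> W = UNIV"
  shows "tridiagonal_pair A As \<and>
         standard_ordering A As (diameter A) (\<lambda>i. a * q powi (2 * int i - int (diameter A))) \<and>
         standard_ordering As A (diameter A) (\<lambda>i. as * q powi (int (diameter A) - 2 * int i))"
proof -
  obtain e where K0: "diagonalizable_spectrum (K 0) (weights q e)"
    and K1: "diagonalizable_spectrum (K 1) (weights q e)"
    using has_type_weights[OF assms(8)] by blast
  define \<theta> where "\<theta> = (\<lambda>i. a * q powi (2 * int i - int e))"
  define \<theta>s where "\<theta>s = (\<lambda>i. as * q powi (int e - 2 * int i))"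
  have spectra: "diagonalizable_spectrum A (\<theta> ` {..e})" "diagonalizable_spectrum As (\<theta>s ` {..e})"
    and serre: "serre q A As = 0" "serre q As A = 0"
    using generator_pair_spectra[OF assms(6,1-4) K0 K1 assms(5)]
      image_q_string_reverse[of "\<lambda>m. as * q powi m" e]
    by (simp_all add: \<theta>_def \<theta>s_def)
  have std: "standard_ordering A As e \<theta>" "standard_ordering As A e \<theta>s"
    using standard_ordering_q_string[OF assms(1,2,3), where c = "- int e" and \<delta> = 2, OF _ _ spectra(1) serre(1)]
      standard_ordering_q_string[OF assms(1,2,4), where c = "int e" and \<delta> = "-2", OF _ _ spectra(2) serre(2)]
    by (simp_all add: \<theta>_def \<theta>s_def)
  moreover have "tridiagonal_pair A As"
    using spectra std assms(9) by (auto simp: tridiagonal_pair_def diagonalizable_spectrum_def)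
  ultimately show ?thesis
    using diameter_standard_ordering[OF std(1)] by (simp add: \<theta>_def \<theta>s_def)
qed

end
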